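(* Let $F:\mathbf{C}\rightleftarrows\mathbf{D}:G$ be an adjunction ($F$ left adjoint to $G$). (a) If $\mathbf{D}$ has the Ramsey property for morphisms, then so does $\mathbf{C}$. (b) If $\mathbf{C}$ has the dual Ramsey property for morphisms, then so does $\mathbf{D}$.
   Context: For objects $\mathcal{A},\mathcal{B}$ of a category, $\hom(\mathcal{A},\mathcal{B})$ is the set of morphisms $\mathcal{A}\to\mathcal{B}$; write $\mathcal{A}\to\mathcal{B}$ if it is nonempty. A $k$-coloring of a set $S$ is a decomposition $S=\mathcal{M}_1\cup\dots\cup\mathcal{M}_k$ into pairwise disjoint sets. For $k\ge2$, $\mathcal{C}\overset{hom}{\longrightarrow}(\mathcal{B})^{\mathcal{A}}_k$ means $\mathcal{A}\to\mathcal{B}\to\mathcal{C}$ and for every $k$-coloring of $\hom(\mathcal{A},\mathcal{C})$ there are $i$ and a morphism $w:\mathcal{B}\to\mathcal{C}$ with $w\cdot\hom(\mathcal{A},\mathcal{B})\subseteq\mathcal{M}_i$. A category has the Ramsey property for morphisms if for every $k\ge2$ and all objects $\mathcal{A},\mathcal{B}$ with $\mathcal{A}\to\mathcal{B}$ there is an object $\mathcal{C}$ with $\mathcal{C}\overset{hom}{\longrightarrow}(\mathcal{B})^{\mathcal{A}}_k$. A category $\mathbf{C}$ has the dual Ramsey property for morphisms if its opposite category $\mathbf{C}^{\mathrm{op}}$ has the Ramsey property for morphisms. *)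

theory Defs
  imports Main
begin

text \<open>Composition convention: cmp C g f is "g after f" (written g \<cdot> f in the paper).\<close>

record ('o, 'm) category =
  Obj :: "'o set"
  Mor :: "'m set"
  Dom :: "'m \<Rightarrow> 'o"
  Cod :: "'m \<Rightarrow> 'o"
  cmp :: "'m \<Rightarrow> 'm \<Rightarrow> 'm"
  idt :: "'o \<Rightarrow> 'm"

definition hom :: "('o, 'm) category \<Rightarrow> 'o \<Rightarrow> 'o \<Rightarrow> 'm set" where
  "hom C a b = {f \<in> Mor C. Dom C f = a \<and> Cod C f = b}"

definition is_category :: "('o, 'm) category \<Rightarrow> bool" where
  "is_category C \<longleftrightarrow>
     (\<forall>f \<in> Mor C. Dom C f \<in> Obj C \<and> Cod C f \<in> Obj C) \<and>
     (\<forall>a \<in> Obj C. idt C a \<in> hom C a a) \<and>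
     (\<forall>a \<in> Obj C. \<forall>b \<in> Obj C. \<forall>c \<in> Obj C. \<forall>f \<in> hom C a b. \<forall>g \<in> hom C b c.
        cmp C g f \<in> hom C a c) \<and>
     (\<forall>a \<in> Obj C. \<forall>b \<in> Obj C. \<forall>c \<in> Obj C. \<forall>d \<in> Obj C.
        \<forall>f \<in> hom C a b. \<forall>g \<in> hom C b c. \<forall>h \<in> hom C c d.
        cmp C h (cmp C g f) = cmp C (cmp C h g) f) \<and>
     (\<forall>a \<in> Obj C. \<forall>b \<in> Obj C. \<forall>f \<in> hom C a b.
        cmp C f (idt C a) = f \<and> cmp C (idt C b) f = f)"

definition opposite :: "('o, 'm) category \<Rightarrow> ('o, 'm) category" where
  "opposite C = \<lparr>Obj = Obj C, Mor = Mor C, Dom = Cod C, Cod = Dom C,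
                 cmp = (\<lambda>g f. cmp C f g), idt = idt C\<rparr>"

definition is_functor ::
  "('o1, 'm1) category \<Rightarrow> ('o2, 'm2) category \<Rightarrow> ('o1 \<Rightarrow> 'o2) \<Rightarrow> ('m1 \<Rightarrow> 'm2) \<Rightarrow> bool" where
  "is_functor C D Fo Fm \<longleftrightarrow>
     (\<forall>a \<in> Obj C. Fo a \<in> Obj D) \<and>
     (\<forall>a \<in> Obj C. \<forall>b \<in> Obj C. \<forall>f \<in> hom C a b. Fm f \<in> hom D (Fo a) (Fo b)) \<and>
     (\<forall>a \<in> Obj C. Fm (idt C a) = idt D (Fo a)) \<and>
     (\<forall>a \<in> Obj C. \<forall>b \<in> Obj C. \<forall>c \<in> Obj C. \<forall>f \<in> hom C a b. \<forall>g \<in> hom C b c.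
        Fm (cmp C g f) = cmp D (Fm g) (Fm f))"

definition is_adjunction ::
  "('oc, 'mc) category \<Rightarrow> ('od, 'md) category \<Rightarrow>
   ('oc \<Rightarrow> 'od) \<Rightarrow> ('mc \<Rightarrow> 'md) \<Rightarrow> ('od \<Rightarrow> 'oc) \<Rightarrow> ('md \<Rightarrow> 'mc) \<Rightarrow>
   ('oc \<Rightarrow> 'od \<Rightarrow> 'md \<Rightarrow> 'mc) \<Rightarrow> bool" where
  "is_adjunction C D Fo Fm Go Gm \<phi> \<longleftrightarrow>
     is_category C \<and> is_category D \<and> is_functor C D Fo Fm \<and> is_functor D C Go Gm \<and>
     (\<forall>A \<in> Obj C. \<forall>B \<in> Obj D. bij_betw (\<phi> A B) (hom D (Fo A) B) (hom C A (Go B))) \<and>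
     (\<forall>A \<in> Obj C. \<forall>A' \<in> Obj C. \<forall>B \<in> Obj D. \<forall>u \<in> hom C A' A. \<forall>f \<in> hom D (Fo A) B.
        \<phi> A' B (cmp D f (Fm u)) = cmp C (\<phi> A B f) u) \<and>
     (\<forall>A \<in> Obj C. \<forall>B \<in> Obj D. \<forall>B' \<in> Obj D. \<forall>g \<in> hom D B B'. \<forall>f \<in> hom D (Fo A) B.
        \<phi> A B' (cmp D g f) = cmp C (Gm g) (\<phi> A B f))"

definition arrows :: "('o, 'm) category \<Rightarrow> 'o \<Rightarrow> 'o \<Rightarrow> bool" where
  "arrows C a b \<longleftrightarrow> hom C a b \<noteq> {}"

definition is_coloring :: "nat \<Rightarrow> 'a set \<Rightarrow> (nat \<Rightarrow> 'a set) \<Rightarrow> bool" where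
  "is_coloring k S M \<longleftrightarrow>
     (\<Union>i \<in> {1..k}. M i) = S \<and>
     (\<forall>i \<in> {1..k}. \<forall>j \<in> {1..k}. i \<noteq> j \<longrightarrow> M i \<inter> M j = {})"

text \<open>C \<longrightarrow>hom (B)^A_k\<close>

definition ramsey_arrow :: "('o, 'm) category \<Rightarrow> nat \<Rightarrow> 'o \<Rightarrow> 'o \<Rightarrow> 'o \<Rightarrow> bool" where
  "ramsey_arrow Cat k A B C \<longleftrightarrow>
     arrows Cat A B \<and> arrows Cat B C \<and>
     (\<forall>M. is_coloring k (hom Cat A C) M \<longrightarrow>
        (\<exists>i \<in> {1..k}. \<exists>w \<in> hom Cat B C. (\<lambda>f. cmp Cat w f) ` hom Cat A B \<subseteq> M i))"

definition ramsey_property_morphisms :: "('o, 'm) category \<Rightarrow> bool" where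
  "ramsey_property_morphisms Cat \<longleftrightarrow>
     (\<forall>k \<ge> 2. \<forall>A \<in> Obj Cat. \<forall>B \<in> Obj Cat. arrows Cat A B \<longrightarrow>
        (\<exists>C \<in> Obj Cat. ramsey_arrow Cat k A B C))"

definition dual_ramsey_property_morphisms :: "('o, 'm) category \<Rightarrow> bool" where
  "dual_ramsey_property_morphisms Cat \<longleftrightarrow> ramsey_property_morphisms (opposite Cat)"

end

theory Submission
  imports Defs
begin

text \<open>For (a), a coloring of hom(A, G X) is transported along the adjunction bijection
to a coloring of hom(F A, X). A monochromatic copy w \<cdot> hom(F A, F B) found in D
transposes, by naturality of the bijection in A, to the monochromatic copy
\<phi> w \<cdot> hom(A, B); thus G X witnesses the Ramsey property for A, B in C whenever X
does for F A, F B in D. Part (b) is (a) applied to the opposite adjunction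
G^op \<dashv> F^op between D^op and C^op.\<close>

lemma hom_opposite [simp]: "hom (opposite C) a b = hom C b a"
  by (auto simp: hom_def opposite_def)

lemma Obj_opposite [simp]: "Obj (opposite C) = Obj C"
  and Mor_opposite [simp]: "Mor (opposite C) = Mor C"
  and Dom_opposite [simp]: "Dom (opposite C) = Cod C"
  and Cod_opposite [simp]: "Cod (opposite C) = Dom C"
  and cmp_opposite [simp]: "cmp (opposite C) g f = cmp C f g"
  and idt_opposite [simp]: "idt (opposite C) = idt C"
  by (simp_all add: opposite_def)

lemma is_category_opposite:
  assumes "is_category C"
  shows "is_category (opposite C)"
  using assms unfolding is_category_def by (simp (no_asm_simp))

lemma is_functor_opposite:
  assumes "is_functor C D Fo Fm"
  shows "is_functor (opposite C) (opposite D) Fo Fm"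
  using assms unfolding is_functor_def by simp

lemma is_coloring_vimage:
  assumes "is_coloring k T M" and "f ` S \<subseteq> T"
  shows "is_coloring k S (\<lambda>i. {x \<in> S. f x \<in> M i})"
  using assms unfolding is_coloring_def by blast

lemma inv_into_natural:
  assumes "bij_betw \<phi> S T" and "inj_on \<phi>' S'" and "y \<in> T"
    and "\<And>x. x \<in> S \<Longrightarrow> h x \<in> S' \<and> \<phi>' (h x) = k (\<phi> x)"
  shows "inv_into S' \<phi>' (k y) = h (inv_into S \<phi> y)"
proof -
  have "inv_into S \<phi> y \<in> S" "\<phi> (inv_into S \<phi> y) = y"
    using assms(1,3) by (auto simp: bij_betw_def inv_into_into f_inv_into_f)
  then show ?thesis
    using assms(2,4) by (metis inv_into_f_eq)
qed

lemma is_adjunction_opposite: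
  assumes "is_adjunction C D Fo Fm Go Gm \<phi>"
  shows "is_adjunction (opposite D) (opposite C) Go Gm Fo Fm
           (\<lambda>B A. inv_into (hom D (Fo A) B) (\<phi> A B))"
proof -
  from assms have cC: "is_category C" and cD: "is_category D"
    and fF: "is_functor C D Fo Fm" and fG: "is_functor D C Go Gm"
    and bij: "\<And>A B. A \<in> Obj C \<Longrightarrow> B \<in> Obj D \<Longrightarrow>
                bij_betw (\<phi> A B) (hom D (Fo A) B) (hom C A (Go B))"
    and natA: "\<And>A A' B u f. A \<in> Obj C \<Longrightarrow> A' \<in> Obj C \<Longrightarrow> B \<in> Obj D \<Longrightarrow>
                u \<in> hom C A' A \<Longrightarrow> f \<in> hom D (Fo A) B \<Longrightarrow>
                \<phi> A' B (cmp D f (Fm u)) = cmp C (\<phi> A B f) u"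
    and natB: "\<And>A B B' g f. A \<in> Obj C \<Longrightarrow> B \<in> Obj D \<Longrightarrow> B' \<in> Obj D \<Longrightarrow>
                g \<in> hom D B B' \<Longrightarrow> f \<in> hom D (Fo A) B \<Longrightarrow>
                \<phi> A B' (cmp D g f) = cmp C (Gm g) (\<phi> A B f)"
    unfolding is_adjunction_def by blast+
  have cmpD: "cmp D g f \<in> hom D a c"
    if "a \<in> Obj D" "b \<in> Obj D" "c \<in> Obj D" "f \<in> hom D a b" "g \<in> hom D b c" for a b c f g
    using cD that unfolding is_category_def by blast
  have FObj: "A \<in> Obj C \<Longrightarrow> Fo A \<in> Obj D" for A
    using fF unfolding is_functor_def by blast
  have Fhom: "A \<in> Obj C \<Longrightarrow> A' \<in> Obj C \<Longrightarrow> u \<in> hom C A' A \<Longrightarrow> Fm u \<in> hom D (Fo A') (Fo A)"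
    for A A' u
    using fF unfolding is_functor_def by blast
  have inj: "A \<in> Obj C \<Longrightarrow> B \<in> Obj D \<Longrightarrow> inj_on (\<phi> A B) (hom D (Fo A) B)" for A B
    using bij bij_betw_def by blast
  define \<psi> where "\<psi> B A = inv_into (hom D (Fo A) B) (\<phi> A B)" for B A
  have "is_adjunction (opposite D) (opposite C) Go Gm Fo Fm \<psi>"
    unfolding is_adjunction_def
  proof (intro conjI ballI)
    show "is_category (opposite D)" "is_category (opposite C)"
      using cC cD by (simp_all add: is_category_opposite)
    show "is_functor (opposite D) (opposite C) Go Gm" "is_functor (opposite C) (opposite D) Fo Fm"
      using fF fG by (simp_all add: is_functor_opposite)
  next
    fix B A assume "B \<in> Obj (opposite D)" "A \<in> Obj (opposite C)"
    then show "bij_betw (\<psi> B A) (hom (opposite C) (Go B) A) (hom (opposite D) B (Fo A))"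
      using bij by (simp add: \<psi>_def bij_betw_inv_into)
  next
    fix B B' A u f
    assume "B \<in> Obj (opposite D)" "B' \<in> Obj (opposite D)" "A \<in> Obj (opposite C)"
      "u \<in> hom (opposite D) B' B" "f \<in> hom (opposite C) (Go B) A"
    then have B: "B \<in> Obj D" and B': "B' \<in> Obj D" and A: "A \<in> Obj C"
      and u: "u \<in> hom D B B'" and f: "f \<in> hom C A (Go B)"
      by simp_all
    have "inv_into (hom D (Fo A) B') (\<phi> A B') ((\<lambda>y. cmp C (Gm u) y) f) =
          (\<lambda>x. cmp D u x) (inv_into (hom D (Fo A) B) (\<phi> A B) f)"
      using natB[OF A B B' u] cmpD[OF FObj[OF A] B B' _ u]
      by (intro inv_into_natural[OF bij[OF A B] inj[OF A B'] f]) simp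
    then show "\<psi> B' A (cmp (opposite C) f (Gm u)) = cmp (opposite D) (\<psi> B A f) u"
      by (simp add: \<psi>_def)
  next
    fix B A A' g f
    assume "B \<in> Obj (opposite D)" "A \<in> Obj (opposite C)" "A' \<in> Obj (opposite C)"
      "g \<in> hom (opposite C) A A'" "f \<in> hom (opposite C) (Go B) A"
    then have B: "B \<in> Obj D" and A: "A \<in> Obj C" and A': "A' \<in> Obj C"
      and g: "g \<in> hom C A' A" and f: "f \<in> hom C A (Go B)"
      by simp_all
    have "inv_into (hom D (Fo A') B) (\<phi> A' B) ((\<lambda>y. cmp C y g) f) =
          (\<lambda>x. cmp D x (Fm g)) (inv_into (hom D (Fo A) B) (\<phi> A B) f)"
      using natA[OF A A' B g] cmpD[OF FObj[OF A'] FObj[OF A] B Fhom[OF A A' g]]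
      by (intro inv_into_natural[OF bij[OF A B] inj[OF A' B] f]) simp
    then show "\<psi> B A' (cmp (opposite C) g f) = cmp (opposite D) (Fm g) (\<psi> B A f)"
      by (simp add: \<psi>_def)
  qed
  then show ?thesis
    unfolding \<psi>_def [abs_def] .
qed

lemma ramsey_arrow_right_adjoint:
  assumes adj: "is_adjunction C D Fo Fm Go Gm \<phi>"
    and A: "A \<in> Obj C" and B: "B \<in> Obj C" and X: "X \<in> Obj D"
    and AB: "arrows C A B" and R: "ramsey_arrow D k (Fo A) (Fo B) X"
  shows "ramsey_arrow C k A B (Go X)"
proof -
  from adj have fF: "is_functor C D Fo Fm"
    and bij: "\<And>A. A \<in> Obj C \<Longrightarrow> bij_betw (\<phi> A X) (hom D (Fo A) X) (hom C A (Go X))"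
    and natA: "\<And>A A' u f. A \<in> Obj C \<Longrightarrow> A' \<in> Obj C \<Longrightarrow>
                u \<in> hom C A' A \<Longrightarrow> f \<in> hom D (Fo A) X \<Longrightarrow>
                \<phi> A' X (cmp D f (Fm u)) = cmp C (\<phi> A X f) u"
    using X unfolding is_adjunction_def by blast+
  have Fhom: "u \<in> hom C A B \<Longrightarrow> Fm u \<in> hom D (Fo A) (Fo B)" for u
    using fF A B unfolding is_functor_def by blast
  have phiA: "\<phi> A X ` hom D (Fo A) X \<subseteq> hom C A (Go X)"
    and phiB: "\<phi> B X ` hom D (Fo B) X \<subseteq> hom C B (Go X)"
    using bij[OF A] bij[OF B] by (auto simp: bij_betw_def)
  from R have arrD: "arrows D (Fo B) X"
    and monoD: "\<And>M. is_coloring k (hom D (Fo A) X) M \<Longrightarrow>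
        \<exists>i \<in> {1..k}. \<exists>w \<in> hom D (Fo B) X. (\<lambda>f. cmp D w f) ` hom D (Fo A) (Fo B) \<subseteq> M i"
    unfolding ramsey_arrow_def by simp_all
  have "arrows C B (Go X)"
    using arrD phiB unfolding arrows_def by blast
  moreover have "\<exists>i \<in> {1..k}. \<exists>w \<in> hom C B (Go X). (\<lambda>f. cmp C w f) ` hom C A B \<subseteq> M i"
    if col: "is_coloring k (hom C A (Go X)) M" for M
  proof -
    obtain i w where i: "i \<in> {1..k}" and w: "w \<in> hom D (Fo B) X"
      and mono: "(\<lambda>f. cmp D w f) ` hom D (Fo A) (Fo B) \<subseteq> {f \<in> hom D (Fo A) X. \<phi> A X f \<in> M i}"
      using monoD[OF is_coloring_vimage[OF col phiA]] by blast
    have "cmp C (\<phi> B X w) g \<in> M i" if g: "g \<in> hom C A B" for g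
    proof -
      have "\<phi> A X (cmp D w (Fm g)) \<in> M i"
        using mono Fhom[OF g] by blast
      then show ?thesis
        by (simp only: natA[OF B A g w])
    qed
    then have "(\<lambda>f. cmp C (\<phi> B X w) f) ` hom C A B \<subseteq> M i"
      by blast
    then show ?thesis
      using i w phiB by blast
  qed
  ultimately show ?thesis
    using AB unfolding ramsey_arrow_def by blast
qed

lemma ramsey_property_left_adjoint:
  assumes adj: "is_adjunction C D Fo Fm Go Gm \<phi>" and R: "ramsey_property_morphisms D"
  shows "ramsey_property_morphisms C"
  unfolding ramsey_property_morphisms_def
proof (intro allI impI ballI)
  fix k :: nat and A B
  assume k: "k \<ge> 2" and A: "A \<in> Obj C" and B: "B \<in> Obj C" and AB: "arrows C A B"
  from adj have fF: "is_functor C D Fo Fm" and fG: "is_functor D C Go Gm"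
    unfolding is_adjunction_def by blast+
  have "arrows D (Fo A) (Fo B)" "Fo A \<in> Obj D" "Fo B \<in> Obj D"
    using fF A B AB unfolding is_functor_def arrows_def by blast+
  then obtain X where X: "X \<in> Obj D" and RX: "ramsey_arrow D k (Fo A) (Fo B) X"
    using R k unfolding ramsey_property_morphisms_def by blast
  have "Go X \<in> Obj C"
    using fG X unfolding is_functor_def by blast
  with ramsey_arrow_right_adjoint[OF adj A B X AB RX]
  show "\<exists>Y\<in>Obj C. ramsey_arrow C k A B Y" by blast
qed

theorem theorem3p1:
  fixes C :: "('oc, 'mc) category" and D :: "('od, 'md) category"
    and Fo :: "'oc \<Rightarrow> 'od" and Fm :: "'mc \<Rightarrow> 'md"
    and Go :: "'od \<Rightarrow> 'oc" and Gm :: "'md \<Rightarrow> 'mc"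
    and \<phi> :: "'oc \<Rightarrow> 'od \<Rightarrow> 'md \<Rightarrow> 'mc"
  assumes "is_adjunction C D Fo Fm Go Gm \<phi>"
  shows "(ramsey_property_morphisms D \<longrightarrow> ramsey_property_morphisms C) \<and>
         (dual_ramsey_property_morphisms C \<longrightarrow> dual_ramsey_property_morphisms D)"
  using ramsey_property_left_adjoint[OF assms]
    ramsey_property_left_adjoint[OF is_adjunction_opposite[OF assms]]
  unfolding dual_ramsey_property_morphisms_def by blast

end
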